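(* For arbitrary $\bar x,\bar s\in\mathbb{R}^{n+1}_{++}$, the matrix $\nabla\psi(\bar x)+\mathrm{diag}(\bar s/\bar x)$ satisfies $d^\top\big(\nabla\psi(\bar x)+\mathrm{diag}(\bar s/\bar x)\big)d>0$ for all nonzero $d\in\mathbb{R}^{n+1}$; in particular it is nonsingular, so for every right-hand side the linear system with this matrix has a unique solution, and hence the Newton system (N) at any $(\bar x^k,\bar s^k)\in\mathbb{R}^{n+1}_{++}\times\mathbb{R}^{n+1}_{++}$ has a unique solution.
   Context: Let $Q\in\mathbb{R}^{n_z\times n_z}$ be symmetric positive semidefinite, $c\in\mathbb{R}^{n_z}$, $A\in\mathbb{R}^{n_b\times n_z}$, $b\in\mathbb{R}^{n_b}$, and $n=n_z+n_b$. Define $M=\begin{bmatrix}Q&-A^\top\\ A&0\end{bmatrix}$ and $q=\begin{bmatrix}c\\-b\end{bmatrix}$. For $\bar x=(x,\tau)\in\mathbb{R}^{n+1}_{++}$ define $\psi(\bar x)=\begin{bmatrix} Mx+q\tau\\ -x^\top Mx/\tau-x^\top q\end{bmatrix}$ and its Jacobian $\nabla\psi(\bar x)=\begin{bmatrix} M & q\\ -x^\top(M+M^\top)/\tau-q^\top & x^\top Mx/\tau^2\end{bmatrix}$. $\bar s/\bar x$ is componentwise division. Newton system (N): given $\bar x^k,\bar s^k\in\mathbb{R}^{n+1}_{++}$ and $\eta,\gamma\in(0,1)$, let $\bar r^k=\bar s^k-\psi(\bar x^k)$ and $\bar\mu^k=(\bar x^k)^\top\bar s^k/(n+1)$; $(d_{\bar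 x},d_{\bar s})$ solves (N) if $d_{\bar s}-\nabla\psi(\bar x^k)d_{\bar x}=-\eta\bar r^k$ and $\bar x^k\odot d_{\bar s}+\bar s^k\odot d_{\bar x}=\gamma\bar\mu^k e-\bar x^k\odot\bar s^k$ ($\odot$ componentwise product, $e$ all-ones vector). *)

theory Defs
  imports "HOL-Analysis.Analysis"
begin

text \<open>Index types: 'z indexes R^{n_z}, 'b indexes R^{n_b}; R^n is indexed by 'z + 'b,
  and R^{n+1} is indexed by ('z + 'b) option, where None is the tau-coordinate.\<close>

definition Mmat :: "real^'z^'z \<Rightarrow> real^'z^'b \<Rightarrow> real^('z + 'b)^('z + 'b)" where
  "Mmat Q A = (\<chi> i j. case (i, j) of
      (Inl p, Inl p') \<Rightarrow> Q $ p $ p'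
    | (Inl p, Inr r) \<Rightarrow> - (A $ r $ p)
    | (Inr r, Inl p) \<Rightarrow> A $ r $ p
    | (Inr r, Inr r') \<Rightarrow> 0)"

definition qvec :: "real^'z \<Rightarrow> real^'b \<Rightarrow> real^('z + 'b)" where
  "qvec c b = (\<chi> i. case i of Inl p \<Rightarrow> c $ p | Inr r \<Rightarrow> - (b $ r))"

definition xpart :: "real^(('n::finite) option) \<Rightarrow> real^'n" where
  "xpart xb = (\<chi> i. xb $ Some i)"

definition taupart :: "real^(('n::finite) option) \<Rightarrow> real" where
  "taupart xb = xb $ None"

definition positive_vec :: "real^'n \<Rightarrow> bool" where
  "positive_vec v \<longleftrightarrow> (\<forall>i. 0 < v $ i)"

definition psi :: "real^('n::finite)^('n) \<Rightarrow> real^'n \<Rightarrow> real^('n option) \<Rightarrow> real^('n option)" where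
  "psi M q xb = (let x = xpart xb; \<tau> = taupart xb in
     (\<chi> k. case k of
        Some i \<Rightarrow> (M *v x + \<tau> *\<^sub>R q) $ i
      | None \<Rightarrow> - (x \<bullet> (M *v x)) / \<tau> - x \<bullet> q))"

definition grad_psi :: "real^('n::finite)^('n) \<Rightarrow> real^'n \<Rightarrow> real^('n option) \<Rightarrow> real^('n option)^('n option)" where
  "grad_psi M q xb = (let x = xpart xb; \<tau> = taupart xb in
     (\<chi> k l. case (k, l) of
        (Some i, Some j) \<Rightarrow> M $ i $ j
      | (Some i, None) \<Rightarrow> q $ i
      | (None, Some j) \<Rightarrow> - ((x v* (M + transpose M)) $ j) / \<tau> - q $ j
      | (None, None) \<Rightarrow> (x \<bullet> (M *v x)) / \<tau>\<^sup>2))"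

definition diag_div :: "real^'m \<Rightarrow> real^'m \<Rightarrow> real^'m^'m" where
  "diag_div s x = (\<chi> i j. if i = j then s $ i / x $ i else 0)"

definition newton_system ::
  "real^('n::finite)^('n) \<Rightarrow> real^'n \<Rightarrow> real \<Rightarrow> real \<Rightarrow> real^('n option) \<Rightarrow> real^('n option)
   \<Rightarrow> real^('n option) \<Rightarrow> real^('n option) \<Rightarrow> bool" where
  "newton_system M q \<eta> \<gamma> xk sk dx ds \<longleftrightarrow>
     (let r = sk - psi M q xk;
          \<mu> = (xk \<bullet> sk) / real CARD('n option) in
      ds - grad_psi M q xk *v dx = - (\<eta> *\<^sub>R r) \<and>
      (\<forall>i. xk $ i * ds $ i + sk $ i * dx $ i = \<gamma> * \<mu> - xk $ i * sk $ i))"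

end

theory Submission
  imports Defs
begin

text \<open>The Jacobian of the homogeneous map psi has the quadratic form
  d' (grad psi) d = w' M w with w = u - (t/tau) x, where d = (u, t); and the quadratic form
  of M is that of Q because the off-diagonal blocks of M are skew. Hence grad psi is positive
  semidefinite, and adding the positive diagonal diag(s/x) makes it positive definite, so it
  is invertible. Eliminating d_s from (N) leaves exactly one linear system with this matrix.\<close>

lemma sum_UNIV_Plus:
  "(\<Sum>k\<in>(UNIV::('a::finite + 'b::finite) set). f k) = (\<Sum>p\<in>UNIV. f (Inl p)) + (\<Sum>r\<in>UNIV. f (Inr r))"
  using sum.Plus[of "UNIV::'a set" "UNIV::'b set" f] by (simp add: comp_def)

lemma sum_UNIV_option:
  "(\<Sum>k\<in>(UNIV::('n::finite option) set). f k) = f None + (\<Sum>i\<in>UNIV. f (Some i))"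
  by (simp add: UNIV_option_conv sum.reindex)

lemma inner_vector_matrix_add_transpose:
  fixes M :: "real^'n::finite^'n"
  shows "(x v* (M + transpose M)) \<bullet> u = x \<bullet> (M *v u) + u \<bullet> (M *v x)"
proof -
  have "(x v* (M + transpose M)) \<bullet> u = x \<bullet> (M *v u) + x \<bullet> (transpose M *v u)"
    by (simp add: dot_lmul_matrix matrix_vector_mult_add_rdistrib inner_add_right)
  also have "x \<bullet> (transpose M *v u) = u \<bullet> (M *v x)"
    by (metis dot_lmul_matrix inner_commute transpose_transpose vector_transpose_matrix)
  finally show ?thesis .
qed

lemma inner_grad_psi:
  fixes M :: "real^'n::finite^'n" and q :: "real^'n" and xb d :: "real^('n option)"
  assumes tau: "taupart xb \<noteq> 0"
  defines "w \<equiv> xpart d - (taupart d / taupart xb) *\<^sub>R xpart xb"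
  shows "d \<bullet> (grad_psi M q xb *v d) = w \<bullet> (M *v w)"
proof -
  define x \<tau> u t where "x = xpart xb" and "\<tau> = taupart xb" and "u = xpart d" and "t = taupart d"
  have d_Some: "d $ Some i = u $ i" for i by (simp add: u_def xpart_def)
  have d_None: "d $ None = t" by (simp add: t_def taupart_def)
  have row_Some: "(grad_psi M q xb *v d) $ Some i = (M *v u) $ i + t * q $ i" for i
    by (simp add: matrix_vector_mult_def grad_psi_def sum_UNIV_option d_Some d_None
        flip: x_def \<tau>_def u_def)
  have "(grad_psi M q xb *v d) $ None = t * (x \<bullet> (M *v x)) / \<tau>\<^sup>2
      + (\<Sum>j\<in>UNIV. (- ((x v* (M + transpose M)) $ j) / \<tau> - q $ j) * u $ j)"
    by (simp add: matrix_vector_mult_def grad_psi_def sum_UNIV_option d_Some d_None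
        flip: x_def \<tau>_def)
  also have "(\<Sum>j\<in>UNIV. (- ((x v* (M + transpose M)) $ j) / \<tau> - q $ j) * u $ j)
      = - ((x v* (M + transpose M)) \<bullet> u) / \<tau> - q \<bullet> u"
    by (simp add: inner_vec_def sum_subtractf sum_divide_distrib left_diff_distrib sum_negf)
  finally have row_None: "(grad_psi M q xb *v d) $ None
      = t * (x \<bullet> (M *v x)) / \<tau>\<^sup>2 - ((x v* (M + transpose M)) \<bullet> u) / \<tau> - q \<bullet> u"
    by simp
  have "d \<bullet> (grad_psi M q xb *v d)
      = t * (grad_psi M q xb *v d) $ None + (\<Sum>i\<in>UNIV. u $ i * (grad_psi M q xb *v d) $ Some i)"
    by (simp add: inner_vec_def sum_UNIV_option d_Some d_None)
  also have "\<dots> = t * (t * (x \<bullet> (M *v x)) / \<tau>\<^sup>2 - ((x v* (M + transpose M)) \<bullet> u) / \<tau> - q \<bullet> u)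
      + (u \<bullet> (M *v u) + t * (u \<bullet> q))"
    by (simp add: row_Some row_None inner_vec_def distrib_left sum.distrib sum_distrib_left
        algebra_simps)
  also have "(x v* (M + transpose M)) \<bullet> u = x \<bullet> (M *v u) + u \<bullet> (M *v x)"
    by (rule inner_vector_matrix_add_transpose)
  finally have "d \<bullet> (grad_psi M q xb *v d) = t * (t * (x \<bullet> (M *v x)) / \<tau>\<^sup>2
      - (x \<bullet> (M *v u) + u \<bullet> (M *v x)) / \<tau> - q \<bullet> u) + (u \<bullet> (M *v u) + t * (u \<bullet> q))" .
  with tau show ?thesis
    by (simp add: w_def flip: x_def \<tau>_def u_def t_def)
      (simp add: matrix_vector_mult_diff_distrib matrix_vector_mult_scaleR inner_diff_left
        inner_diff_right inner_commute[of q u] power2_eq_square field_simps)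
qed

lemma inner_Mmat:
  fixes Q :: "real^'z::finite^'z" and A :: "real^'z^'b::finite" and y :: "real^('z + 'b)"
  defines "yz \<equiv> \<chi> p. y $ Inl p"
  shows "y \<bullet> (Mmat Q A *v y) = yz \<bullet> (Q *v yz)"
proof -
  have row_Inl: "(Mmat Q A *v y) $ Inl p = (Q *v yz) $ p - (\<Sum>r\<in>UNIV. A $ r $ p * y $ Inr r)" for p
    by (simp add: matrix_vector_mult_def Mmat_def sum_UNIV_Plus yz_def sum_negf)
  have row_Inr: "(Mmat Q A *v y) $ Inr r = (\<Sum>p\<in>UNIV. A $ r $ p * y $ Inl p)" for r
    by (simp add: matrix_vector_mult_def Mmat_def sum_UNIV_Plus)
  have "y \<bullet> (Mmat Q A *v y) = yz \<bullet> (Q *v yz)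
      - (\<Sum>p\<in>UNIV. \<Sum>r\<in>UNIV. y $ Inl p * (A $ r $ p * y $ Inr r))
      + (\<Sum>r\<in>UNIV. \<Sum>p\<in>UNIV. y $ Inr r * (A $ r $ p * y $ Inl p))"
    by (simp add: inner_vec_def sum_UNIV_Plus row_Inl row_Inr right_diff_distrib sum_subtractf
        sum_distrib_left yz_def)
  also have "(\<Sum>p\<in>UNIV. \<Sum>r\<in>UNIV. y $ Inl p * (A $ r $ p * y $ Inr r))
      = (\<Sum>r\<in>UNIV. \<Sum>p\<in>UNIV. y $ Inr r * (A $ r $ p * y $ Inl p))"
    by (subst sum.swap) (simp add: algebra_simps)
  finally show ?thesis by simp
qed

lemma inner_grad_psi_Mmat_nonneg:
  fixes Q :: "real^'z::finite^'z" and A :: "real^'z^'b::finite"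
  assumes "\<forall>v. 0 \<le> v \<bullet> (Q *v v)" and "taupart xb \<noteq> 0"
  shows "0 \<le> d \<bullet> (grad_psi (Mmat Q A) q xb *v d)"
  using assms by (simp add: inner_grad_psi inner_Mmat)

lemma diag_div_mult_vec: "(diag_div s x *v d) $ i = s $ i / x $ i * d $ i"
proof -
  have "(diag_div s x *v d) $ i = (\<Sum>j\<in>UNIV. if i = j then s $ i / x $ i * d $ j else 0)"
    unfolding matrix_vector_mult_def diag_div_def vec_lambda_beta by (rule sum.cong) auto
  then show ?thesis by simp
qed

lemma inner_diag_div_pos:
  assumes "positive_vec s" and "positive_vec x" and "d \<noteq> 0"
  shows "0 < d \<bullet> (diag_div s x *v d)"
proof -
  have pos: "0 < s $ i / x $ i" for i
    using assms(1,2) by (simp add: positive_vec_def)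
  obtain i where "d $ i \<noteq> 0"
    using assms(3) by (auto simp: vec_eq_iff)
  with pos have "0 < s $ i / x $ i * (d $ i)\<^sup>2" by (intro mult_pos_pos) auto
  also have "\<dots> \<le> (\<Sum>j\<in>UNIV. s $ j / x $ j * (d $ j)\<^sup>2)"
  proof (rule member_le_sum)
    show "0 \<le> s $ j / x $ j * (d $ j)\<^sup>2" for j
      by (intro mult_nonneg_nonneg less_imp_le[OF pos]) simp
  qed auto
  also have "\<dots> = d \<bullet> (diag_div s x *v d)"
    by (simp add: inner_vec_def diag_div_mult_vec power2_eq_square algebra_simps)
  finally show ?thesis .
qed

lemma positive_definite_imp_invertible:
  fixes K :: "real^'n::finite^'n"
  assumes "\<And>d. d \<noteq> 0 \<Longrightarrow> 0 < d \<bullet> (K *v d)"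
  shows "invertible K"
proof -
  have "K *v d = 0 \<Longrightarrow> d = 0" for d
    using assms[of d] by fastforce
  then show ?thesis
    by (meson invertible_left_inverse matrix_left_invertible_ker)
qed

text \<open>Substituting d_s from the first equation of (N) into the second and dividing
  row i by the positive x_i turns (N) into a linear system for d_x with matrix
  grad psi + diag(s/x).\<close>

lemma newton_system_iff:
  fixes M :: "real^'n::finite^'n" and q :: "real^'n" and \<eta> \<gamma> :: real
    and xb sb dx ds :: "real^('n option)"
  assumes xpos: "positive_vec xb"
  defines "G \<equiv> grad_psi M q xb"
    and "r \<equiv> sb - psi M q xb"
    and "\<mu> \<equiv> (xb \<bullet> sb) / real CARD('n option)"
  defines "v \<equiv> \<chi> i. (\<gamma> * \<mu> - xb $ i * sb $ i + \<eta> * xb $ i * r $ i) / xb $ i"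
  shows "newton_system M q \<eta> \<gamma> xb sb dx ds
      \<longleftrightarrow> ds = G *v dx - \<eta> *\<^sub>R r \<and> (G + diag_div sb xb) *v dx = v"
proof -
  have row: "xb $ i * (G *v dx - \<eta> *\<^sub>R r) $ i + sb $ i * dx $ i = \<gamma> * \<mu> - xb $ i * sb $ i
      \<longleftrightarrow> ((G + diag_div sb xb) *v dx) $ i = v $ i" for i
    using xpos[unfolded positive_vec_def, rule_format, of i]
    by (simp add: v_def matrix_vector_mult_add_rdistrib diag_div_mult_vec field_simps)
  have "ds - G *v dx = - (\<eta> *\<^sub>R r) \<longleftrightarrow> ds = G *v dx - \<eta> *\<^sub>R r"
    by (auto simp: algebra_simps)
  with row show ?thesis
    unfolding newton_system_def Let_def vec_eq_iff[of "_ *v dx"]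
      G_def[symmetric] r_def[symmetric] \<mu>_def[symmetric]
    by auto
qed

theorem mainTheorem9:
  fixes Q :: "real^'z^'z" and A :: "real^'z^'b" and c :: "real^'z" and b :: "real^'b"
    and \<eta> \<gamma> :: real
    and xb sb :: "real^(('z + 'b) option)"
  assumes Q_sym: "transpose Q = Q"
    and Q_psd: "\<forall>v. 0 \<le> v \<bullet> (Q *v v)"
    and eta: "0 < \<eta>" "\<eta> < 1"
    and gamma: "0 < \<gamma>" "\<gamma> < 1"
    and xpos: "positive_vec xb"
    and spos: "positive_vec sb"
  shows "(\<forall>d. d \<noteq> 0 \<longrightarrow>
            0 < d \<bullet> ((grad_psi (Mmat Q A) (qvec c b) xb + diag_div sb xb) *v d))
       \<and> invertible (grad_psi (Mmat Q A) (qvec c b) xb + diag_div sb xb)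
       \<and> (\<forall>rhs. \<exists>!d. (grad_psi (Mmat Q A) (qvec c b) xb + diag_div sb xb) *v d = rhs)
       \<and> (\<exists>!dd. newton_system (Mmat Q A) (qvec c b) \<eta> \<gamma> xb sb (fst dd) (snd dd))"
proof -
  define G where "G = grad_psi (Mmat Q A) (qvec c b) xb"
  define K where "K = G + diag_div sb xb"
  have "taupart xb \<noteq> 0"
    using xpos by (simp add: positive_vec_def taupart_def less_imp_neq[symmetric])
  have pos_def: "0 < d \<bullet> (K *v d)" if "d \<noteq> 0" for d
    using inner_grad_psi_Mmat_nonneg[OF Q_psd \<open>taupart xb \<noteq> 0\<close>, of d A "qvec c b"]
      inner_diag_div_pos[OF spos xpos that]
    by (simp add: K_def G_def matrix_vector_mult_add_rdistrib inner_add_right add_nonneg_pos)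
  then have inv: "invertible K"
    by (rule positive_definite_imp_invertible)
  then have unique: "\<forall>rhs. \<exists>!d. K *v d = rhs"
    by (simp add: invertible_eq_bij bij_iff)
  have "\<exists>!dd. newton_system (Mmat Q A) (qvec c b) \<eta> \<gamma> xb sb (fst dd) (snd dd)"
    unfolding newton_system_iff[OF xpos] G_def[symmetric] K_def[symmetric]
    using unique by (metis (no_types, lifting) prod.collapse fst_conv snd_conv)
  with pos_def inv unique show ?thesis
    unfolding K_def G_def by blast
qed

end
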